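(* For any graph $G = (V,E)$ we have \[ \operatorname{pn}_\ell(G) \geq \max\left\{ \frac{|E(H)|}{2|V(H)|-3} \;\middle|\; H \subseteq G,\ H \neq \emptyset\right\}. \]
   Context: All graphs are finite and simple; $H \subseteq G$ ranges over nonempty subgraphs of $G$. A linear embedding of $G=(V,E)$ is a pair $(\prec,\mathcal{P})$ where $\prec$ is a total ordering of $V$ and $\mathcal{P}$ is a partition of $E$ into parts called pages. Two edges $uv, xy$ with $u\prec v$, $x \prec y$ cross if $u \prec x \prec v \prec y$ or $x \prec u \prec y \prec v$. A book embedding is a linear embedding in which no two crossing edges lie on the same page. For a book embedding and a vertex $v$, let $\mathcal{P}_v$ be the set of pages containing at least one edge incident to $v$; the embedding is $k$-local if $|\mathcal{P}_v| \le k$ for all $v$. The local page number $\operatorname{pn}_\ell(G)$ is the smallest $k$ such that $G$ admits a $k$-local book embedding (with any number of pages). *)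

theory Defs
  imports Complex_Main
begin

definition graph :: "'a set \<Rightarrow> 'a set set \<Rightarrow> bool" where
  "graph V E \<longleftrightarrow> finite V \<and>
     (\<forall>e\<in>E. \<exists>u v. u \<noteq> v \<and> u \<in> V \<and> v \<in> V \<and> e = {u, v})"

definition subgraph :: "'a set \<Rightarrow> 'a set set \<Rightarrow> 'a set \<Rightarrow> 'a set set \<Rightarrow> bool" where
  "subgraph VH EH V E \<longleftrightarrow> VH \<subseteq> V \<and> EH \<subseteq> E \<and> graph VH EH"

text \<open>The total order of the vertices is given by an injective position map pos
  (u before v iff pos u < pos v); the partition of the edges into pages is given by
  a page labelling pg (each page is a nonempty fibre of pg on E).\<close>
definition crossing :: "('a \<Rightarrow> nat) \<Rightarrow> 'a set \<Rightarrow> 'a set \<Rightarrow> bool" where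
  "crossing pos e f \<longleftrightarrow> (\<exists>u v x y. e = {u, v} \<and> f = {x, y} \<and>
      pos u < pos v \<and> pos x < pos y \<and>
      ((pos u < pos x \<and> pos x < pos v \<and> pos v < pos y) \<or>
       (pos x < pos u \<and> pos u < pos y \<and> pos y < pos v)))"

definition book_embedding ::
  "'a set \<Rightarrow> 'a set set \<Rightarrow> ('a \<Rightarrow> nat) \<Rightarrow> ('a set \<Rightarrow> nat) \<Rightarrow> bool" where
  "book_embedding V E pos pg \<longleftrightarrow> inj_on pos V \<and>
     (\<forall>e\<in>E. \<forall>f\<in>E. crossing pos e f \<longrightarrow> pg e \<noteq> pg f)"

definition pages_at :: "'a set set \<Rightarrow> ('a set \<Rightarrow> nat) \<Rightarrow> 'a \<Rightarrow> nat set" where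
  "pages_at E pg v = pg ` {e \<in> E. v \<in> e}"

definition k_local :: "'a set \<Rightarrow> 'a set set \<Rightarrow> ('a set \<Rightarrow> nat) \<Rightarrow> nat \<Rightarrow> bool" where
  "k_local V E pg k \<longleftrightarrow> (\<forall>v\<in>V. card (pages_at E pg v) \<le> k)"

definition local_page_number :: "'a set \<Rightarrow> 'a set set \<Rightarrow> nat" where
  "local_page_number V E =
     (LEAST k. \<exists>pos pg. book_embedding V E pos pg \<and> k_local V E pg k)"

end

theory Submission
  imports Defs
begin

(* Along the vertex order, the edges of one page are pairwise non-crossing intervals, and at most
   2n - 3 non-crossing intervals have their endpoints among n \<ge> 2 points.  A k-local book
   embedding of G restricts to one of H.  If page p touches the vertex set U_p and P_v is the set
   of pages at v, double counting gives
     |E(H)| + 3|P| \<le> 2 \<Sum>_p |U_p| = 2 \<Sum>_v |P_v| \<le> 2 n m,   where m = min k |P|,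
   hence |E(H)| \<le> m (2n - 3) \<le> k (2n - 3). *)

definition intervals_in :: "'a::linorder set \<Rightarrow> ('a \<times> 'a) set" where
  "intervals_in S = {(x, y). x \<in> S \<and> y \<in> S \<and> x < y}"

definition noncrossing :: "('a::linorder \<times> 'a) set \<Rightarrow> bool" where
  "noncrossing F \<longleftrightarrow> (\<forall>(a, b)\<in>F. \<forall>(c, d)\<in>F. \<not> (a < c \<and> c < b \<and> b < d))"

lemma noncrossingI:
  "(\<And>a b c d. (a, b) \<in> F \<Longrightarrow> (c, d) \<in> F \<Longrightarrow> \<not> (a < c \<and> c < b \<and> b < d)) \<Longrightarrow> noncrossing F"
  unfolding noncrossing_def by blast

lemma noncrossing_subset: "noncrossing F \<Longrightarrow> G \<subseteq> F \<Longrightarrow> noncrossing G"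
  unfolding noncrossing_def by blast

lemma two_le_card: "finite S \<Longrightarrow> x \<in> S \<Longrightarrow> y \<in> S \<Longrightarrow> x \<noteq> y \<Longrightarrow> 2 \<le> card S"
  by (metis card_2_iff card_mono empty_subsetI insert_subset)

lemma finite_intervals_in: "finite S \<Longrightarrow> finite (intervals_in S)"
  unfolding intervals_in_def by (rule finite_subset[of _ "S \<times> S"]) auto

lemma intervals_in_eq_empty: "finite S \<Longrightarrow> card S < 2 \<Longrightarrow> intervals_in S = {}"
  unfolding intervals_in_def using two_le_card by fastforce

lemma card_split_at:
  fixes S :: "'a::linorder set"
  assumes "finite S" "c \<in> S"
  shows "card {x\<in>S. x \<le> c} + card {x\<in>S. c \<le> x} = card S + 1"
proof -
  have "{x\<in>S. x \<le> c} \<union> {x\<in>S. c \<le> x} = S" "{x\<in>S. x \<le> c} \<inter> {x\<in>S. c \<le> x} = {c}"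
    using assms(2) by auto
  then show ?thesis
    using card_Un_Int[of "{x\<in>S. x \<le> c}" "{x\<in>S. c \<le> x}"] assms(1) by simp
qed

lemma noncrossing_cut_point:
  fixes S :: "'a::linorder set"
  assumes "finite S" "F \<subseteq> intervals_in S" "noncrossing F"
    and "(Min S, y) \<in> F" "y \<noteq> Max S"
  obtains c where "c \<in> S" "Min S < c" "c < Max S"
    "\<forall>(x, z)\<in>F - {(Min S, Max S)}. z \<le> c \<or> c \<le> x"
proof -
  define a where "a = Min S"
  define Y where "Y = {z. (a, z) \<in> F \<and> z \<noteq> Max S}"
  define c where "c = Max Y"
  have "Y \<subseteq> S"
    using assms(2) unfolding Y_def intervals_in_def by auto
  then have "finite Y" "Y \<noteq> {}"
    using assms(1,4,5) finite_subset unfolding Y_def a_def by auto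
  then have "c \<in> Y" and c_max: "\<And>z. (a, z) \<in> F \<Longrightarrow> z \<noteq> Max S \<Longrightarrow> z \<le> c"
    unfolding c_def using Max_in Max_ge by (blast, simp add: Y_def)
  then have acF: "(a, c) \<in> F" and "c \<noteq> Max S"
    unfolding Y_def by auto
  then have "c \<in> S" "a < c"
    using assms(2) unfolding intervals_in_def by auto
  then have "c < Max S"
    using \<open>c \<noteq> Max S\<close> assms(1) by (simp add: order_less_le)
  \<comment> \<open>An interval straddling c either starts at Min S, against the maximality of c,
    or crosses (Min S, c).\<close>
  moreover have "z \<le> c \<or> c \<le> x" if "(x, z) \<in> F" "(x, z) \<noteq> (a, Max S)" for x z
  proof (rule ccontr)
    assume "\<not> (z \<le> c \<or> c \<le> x)"
    then have "x < c" "c < z" by auto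
    have "x \<in> S" "z \<in> S"
      using that(1) assms(2) unfolding intervals_in_def by auto
    show False
    proof (cases "x = a")
      case True
      then show False
        using c_max[of z] that \<open>c < z\<close> \<open>z \<in> S\<close> assms(1) by (force simp: a_def)
    next
      case False
      then have "a < x"
        using \<open>x \<in> S\<close> assms(1) unfolding a_def by (simp add: order_less_le)
      then show False
        using assms(3) acF that(1) \<open>x < c\<close> \<open>c < z\<close> unfolding noncrossing_def by fastforce
    qed
  qed
  ultimately show thesis
    using that \<open>c \<in> S\<close> \<open>a < c\<close> unfolding a_def by blast
qed

lemma card_le_split_at:
  fixes S :: "'a::linorder set"
  assumes "finite S" "F \<subseteq> intervals_in S" "\<forall>(x, z)\<in>F - {p}. z \<le> c \<or> c \<le> x"
  shows "card F \<le> card (F \<inter> intervals_in {x\<in>S. x \<le> c}) + card (F \<inter> intervals_in {x\<in>S. c \<le> x}) + 1"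
proof -
  define F1 where "F1 = F \<inter> intervals_in {x\<in>S. x \<le> c}"
  define F2 where "F2 = F \<inter> intervals_in {x\<in>S. c \<le> x}"
  have "finite F"
    using assms(2) finite_intervals_in[OF assms(1)] by (rule finite_subset)
  then have fin: "finite F1" "finite F2"
    unfolding F1_def F2_def by simp_all
  have "F \<subseteq> insert p (F1 \<union> F2)"
    using assms(2,3) unfolding F1_def F2_def intervals_in_def by fastforce
  then have "card F \<le> card (insert p (F1 \<union> F2))"
    using fin by (intro card_mono) auto
  also have "\<dots> \<le> card (F1 \<union> F2) + 1"
    by (simp add: card_insert_if fin)
  also have "card (F1 \<union> F2) = card F1 + card F2"
    using fin by (intro card_Un_disjoint) (auto simp: F1_def F2_def intervals_in_def)
  finally show ?thesis
    unfolding F1_def F2_def .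
qed

lemma intervals_in_Diff_Min:
  fixes S :: "'a::linorder set"
  assumes "finite S" "F \<subseteq> intervals_in S" "\<forall>y. (Min S, y) \<in> F \<longrightarrow> y = Max S"
  shows "F - {(Min S, Max S)} \<subseteq> intervals_in (S - {Min S})"
proof
  fix p assume "p \<in> F - {(Min S, Max S)}"
  then obtain x y where "p = (x, y)" "(x, y) \<in> F" "(x, y) \<noteq> (Min S, Max S)"
    by (cases p) auto
  moreover have "Min S \<le> x"
    using \<open>(x, y) \<in> F\<close> assms(1,2) unfolding intervals_in_def by auto
  ultimately show "p \<in> intervals_in (S - {Min S})"
    using assms(2,3) unfolding intervals_in_def by auto
qed

lemma card_noncrossing_le:
  fixes S :: "'a::linorder set"
  assumes "finite S" "F \<subseteq> intervals_in S" "noncrossing F" "2 \<le> card S"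
  shows "card F + 3 \<le> 2 * card S"
  using assms
proof (induction "card S" arbitrary: S F rule: less_induct)
  case less
  have IH: "card (F' \<inter> intervals_in T) + 3 \<le> 2 * card T"
    if "F' \<subseteq> F" "T \<subset> S" "2 \<le> card T" for F' T
  proof (rule less.hyps)
    show "card T < card S"
      using that(2) less.prems(1) by (rule psubset_card_mono[rotated])
    show "noncrossing (F' \<inter> intervals_in T)"
      using noncrossing_subset[OF less.prems(3)] that(1) by blast
  qed (use that less.prems(1) finite_subset in auto)
  define a where "a = Min S"
  define b where "b = Max S"
  have "S \<noteq> {}"
    using less.prems(4) by auto
  then have "a \<in> S" "b \<in> S"
    using less.prems(1) unfolding a_def b_def by simp_all
  have "finite F"
    using less.prems(2) finite_intervals_in[OF less.prems(1)] by (rule finite_subset)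
  \<comment> \<open>Either a partner of Min S other than Max S cuts S into two halves sharing one point,
    or Min S lies only on the interval (Min S, Max S) and can be deleted.\<close>
  show ?case
  proof (cases "\<exists>y. (a, y) \<in> F \<and> y \<noteq> b")
    case True
    then obtain c where "c \<in> S" "a < c" "c < b" and cut: "\<forall>(x, z)\<in>F - {(a, b)}. z \<le> c \<or> c \<le> x"
      using noncrossing_cut_point[OF less.prems(1-3)] unfolding a_def b_def by metis
    define S1 where "S1 = {x\<in>S. x \<le> c}"
    define S2 where "S2 = {x\<in>S. c \<le> x}"
    have "b \<notin> S1" "a \<notin> S2"
      using \<open>a < c\<close> \<open>c < b\<close> unfolding S1_def S2_def by auto
    then have "S1 \<subset> S" "S2 \<subset> S"
      using \<open>a \<in> S\<close> \<open>b \<in> S\<close> unfolding S1_def S2_def by blast+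
    have "card (F \<inter> intervals_in S1) + 3 \<le> 2 * card S1"
      using \<open>S1 \<subset> S\<close> \<open>a \<in> S\<close> \<open>c \<in> S\<close> \<open>a < c\<close>
      by (intro IH two_le_card[of S1 a c]) (auto simp: S1_def less.prems(1))
    moreover have "card (F \<inter> intervals_in S2) + 3 \<le> 2 * card S2"
      using \<open>S2 \<subset> S\<close> \<open>b \<in> S\<close> \<open>c \<in> S\<close> \<open>c < b\<close>
      by (intro IH two_le_card[of S2 c b]) (auto simp: S2_def less.prems(1))
    moreover have "card F \<le> card (F \<inter> intervals_in S1) + card (F \<inter> intervals_in S2) + 1"
      unfolding S1_def S2_def using less.prems(1,2) cut by (rule card_le_split_at)
    moreover have "card S1 + card S2 = card S + 1"
      unfolding S1_def S2_def using less.prems(1) \<open>c \<in> S\<close> by (rule card_split_at)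
    ultimately show ?thesis
      by linarith
  next
    case False
    define F' where "F' = F - {(a, b)}"
    have "F' \<subseteq> intervals_in (S - {a})"
      unfolding F'_def a_def b_def using less.prems(1,2) False
      by (intro intervals_in_Diff_Min) (auto simp: a_def b_def)
    have "card F \<le> card F' + 1"
      unfolding F'_def using \<open>finite F\<close> by (cases "(a, b) \<in> F") (simp_all add: card_Diff_singleton_if)
    show ?thesis
    proof (cases "2 \<le> card (S - {a})")
      case True
      then have "card (F' \<inter> intervals_in (S - {a})) + 3 \<le> 2 * card (S - {a})"
        using \<open>a \<in> S\<close> by (intro IH) (auto simp: F'_def)
      moreover have "card (S - {a}) = card S - 1"
        using \<open>a \<in> S\<close> by simp
      ultimately show ?thesis
        using \<open>card F \<le> card F' + 1\<close> \<open>F' \<subseteq> _\<close> less.prems(4) by (simp add: Int_absorb2)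
    next
      case False
      then have "F' = {}"
        using \<open>F' \<subseteq> _\<close> less.prems(1) intervals_in_eq_empty[of "S - {a}"] by auto
      then show ?thesis
        using \<open>card F \<le> card F' + 1\<close> less.prems(4) by simp
    qed
  qed
qed

lemma graph_Union_subset:
  assumes "graph V E"
  shows "\<Union>E \<subseteq> V"
proof
  fix x assume "x \<in> \<Union>E"
  then obtain e where "e \<in> E" "x \<in> e"
    by blast
  moreover obtain u v where "u \<in> V" "v \<in> V" "e = {u, v}"
    using assms \<open>e \<in> E\<close> unfolding graph_def by blast
  ultimately show "x \<in> V"
    by auto
qed

lemma graph_finite_edges:
  assumes "graph V E"
  shows "finite E"
proof -
  have "E \<subseteq> Pow V"
    using graph_Union_subset[OF assms] by blast
  moreover have "finite V"
    using assms unfolding graph_def by blast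
  ultimately show ?thesis
    by (meson finite_Pow_iff finite_subset)
qed

lemma graph_mono: "graph V E \<Longrightarrow> E' \<subseteq> E \<Longrightarrow> graph V E'"
  unfolding graph_def by blast

lemma graph_no_edges:
  assumes "graph V E" "card V < 2"
  shows "E = {}"
proof (rule ccontr)
  assume "E \<noteq> {}"
  then obtain e where "e \<in> E"
    by blast
  then obtain u v where "u \<noteq> v" "u \<in> V" "v \<in> V"
    using assms(1) unfolding graph_def by blast
  moreover have "finite V"
    using assms(1) unfolding graph_def by blast
  ultimately show False
    using assms(2) two_le_card[of V u v] by simp
qed

definition extent :: "('a \<Rightarrow> 'b::linorder) \<Rightarrow> 'a set \<Rightarrow> 'b \<times> 'b" where
  "extent pos e = (Min (pos ` e), Max (pos ` e))"

lemma extent_doubleton: "pos u < pos v \<Longrightarrow> extent pos {u, v} = (pos u, pos v)"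
  unfolding extent_def by auto

lemma graph_edge_oriented:
  fixes pos :: "'a \<Rightarrow> 'b::linorder"
  assumes "graph V E" "inj_on pos V" "e \<in> E"
  obtains u v where "u \<in> V" "v \<in> V" "e = {u, v}" "pos u < pos v" "extent pos e = (pos u, pos v)"
proof -
  obtain u v where "u \<noteq> v" "u \<in> V" "v \<in> V" "e = {u, v}"
    using assms(1,3) unfolding graph_def by blast
  moreover have "pos u \<noteq> pos v"
    using assms(2) calculation by (meson inj_on_eq_iff)
  ultimately consider "pos u < pos v" | "pos v < pos u"
    by (meson linorder_neqE)
  then show thesis
  proof cases
    case 1
    then show thesis
      using that[of u v] \<open>u \<in> V\<close> \<open>v \<in> V\<close> \<open>e = {u, v}\<close> by (simp add: extent_doubleton)
  next
    case 2
    have "e = {v, u}"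
      using \<open>e = {u, v}\<close> by (simp add: insert_commute)
    then show thesis
      using that[of v u] 2 \<open>u \<in> V\<close> \<open>v \<in> V\<close> by (simp add: extent_doubleton)
  qed
qed

lemma crossingI:
  "pos u < pos x \<Longrightarrow> pos x < pos v \<Longrightarrow> pos v < pos y \<Longrightarrow> crossing pos {u, v} {x, y}"
  unfolding crossing_def by (intro exI[of _ u] exI[of _ v] exI[of _ x] exI[of _ y]) auto

lemma crossing_irrefl: "\<not> crossing pos e e"
  unfolding crossing_def by (auto simp: doubleton_eq_iff)

lemma inj_on_extent:
  assumes "graph V E" "inj_on pos V"
  shows "inj_on (extent pos) E"
proof (rule inj_onI)
  fix e f assume "e \<in> E" "f \<in> E" and ext: "extent pos e = extent pos f"
  obtain u v where "u \<in> V" "v \<in> V" "e = {u, v}" "pos u < pos v" "extent pos e = (pos u, pos v)"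
    by (rule graph_edge_oriented[OF assms \<open>e \<in> E\<close>])
  moreover obtain x y where "x \<in> V" "y \<in> V" "f = {x, y}" "pos x < pos y" "extent pos f = (pos x, pos y)"
    by (rule graph_edge_oriented[OF assms \<open>f \<in> E\<close>])
  ultimately have "pos u = pos x" "pos v = pos y"
    using ext by simp_all
  then have "u = x" "v = y"
    using inj_onD[OF assms(2)] \<open>u \<in> V\<close> \<open>v \<in> V\<close> \<open>x \<in> V\<close> \<open>y \<in> V\<close> by blast+
  then show "e = f"
    using \<open>e = {u, v}\<close> \<open>f = {x, y}\<close> by simp
qed

lemma extent_in_intervals_in:
  assumes "graph V E" "inj_on pos V" "e \<in> E"
  shows "extent pos e \<in> intervals_in (pos ` \<Union>E)"
proof -
  obtain u v where "u \<in> V" "v \<in> V" "e = {u, v}" "pos u < pos v" "extent pos e = (pos u, pos v)"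
    by (rule graph_edge_oriented[OF assms])
  moreover have "u \<in> \<Union>E" "v \<in> \<Union>E"
    using assms(3) \<open>e = {u, v}\<close> by auto
  ultimately show ?thesis
    unfolding intervals_in_def by simp
qed

lemma noncrossing_extent_image:
  fixes pos :: "'a \<Rightarrow> nat"
  assumes "graph V E" "inj_on pos V" "\<forall>e\<in>E. \<forall>f\<in>E. \<not> crossing pos e f"
  shows "noncrossing (extent pos ` E)"
proof (rule noncrossingI)
  fix a b c d
  assume "(a, b) \<in> extent pos ` E" "(c, d) \<in> extent pos ` E"
  then obtain e f where "e \<in> E" "f \<in> E" and ab: "extent pos e = (a, b)" and cd: "extent pos f = (c, d)"
    by auto
  obtain u v where "u \<in> V" "v \<in> V" "e = {u, v}" "pos u < pos v" "extent pos e = (pos u, pos v)"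
    by (rule graph_edge_oriented[OF assms(1,2) \<open>e \<in> E\<close>])
  moreover obtain x y where "x \<in> V" "y \<in> V" "f = {x, y}" "pos x < pos y" "extent pos f = (pos x, pos y)"
    by (rule graph_edge_oriented[OF assms(1,2) \<open>f \<in> E\<close>])
  ultimately have "a = pos u" "b = pos v" "c = pos x" "d = pos y"
    using ab cd by simp_all
  moreover have "\<not> crossing pos {u, v} {x, y}"
    using assms(3) \<open>e \<in> E\<close> \<open>f \<in> E\<close> \<open>e = {u, v}\<close> \<open>f = {x, y}\<close> by simp
  ultimately show "\<not> (a < c \<and> c < b \<and> b < d)"
    using crossingI[of pos u x v y] by blast
qed

lemma card_noncrossing_edges_le:
  fixes pos :: "'a \<Rightarrow> nat"
  assumes "graph V E" "inj_on pos V" "E \<noteq> {}" "\<forall>e\<in>E. \<forall>f\<in>E. \<not> crossing pos e f"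
  shows "card E + 3 \<le> 2 * card (\<Union>E)"
proof -
  have "\<Union>E \<subseteq> V"
    using assms(1) by (rule graph_Union_subset)
  moreover have "finite V"
    using assms(1) unfolding graph_def by blast
  ultimately have fin: "finite (pos ` \<Union>E)"
    using finite_subset by blast
  obtain e where "e \<in> E"
    using assms(3) by blast
  then have "intervals_in (pos ` \<Union>E) \<noteq> {}"
    using extent_in_intervals_in[OF assms(1,2)] by blast
  then have "2 \<le> card (pos ` \<Union>E)"
    using intervals_in_eq_empty[OF fin] not_le by blast
  then have "card (extent pos ` E) + 3 \<le> 2 * card (pos ` \<Union>E)"
    using fin extent_in_intervals_in[OF assms(1,2)] noncrossing_extent_image[OF assms(1,2,4)]
    by (intro card_noncrossing_le) auto
  moreover have "card (extent pos ` E) = card E"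
    using inj_on_extent[OF assms(1,2)] by (rule card_image)
  moreover have "card (pos ` \<Union>E) = card (\<Union>E)"
    using inj_on_subset[OF assms(2) \<open>\<Union>E \<subseteq> V\<close>] by (rule card_image)
  ultimately show ?thesis
    by simp
qed

lemma sum_card_page_vertices:
  assumes "graph V E"
  shows "(\<Sum>p\<in>pg ` E. card (\<Union>{e \<in> E. pg e = p})) = (\<Sum>v\<in>V. card (pages_at E pg v))"
proof -
  define incident where "incident p v \<longleftrightarrow> (\<exists>e\<in>E. v \<in> e \<and> p = pg e)" for p v
  have "finite V"
    using assms unfolding graph_def by blast
  moreover have "finite (pg ` E)"
    using graph_finite_edges[OF assms] by simp
  ultimately have "(\<Sum>p\<in>pg ` E. card {v \<in> V. incident p v}) = (\<Sum>v\<in>V. card {p \<in> pg ` E. incident p v})"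
    by (intro sum_multicount_gen) simp_all
  moreover have "\<Union>{e \<in> E. pg e = p} = {v \<in> V. incident p v}" for p
    using graph_Union_subset[OF assms] unfolding incident_def by auto
  moreover have "pages_at E pg v = {p \<in> pg ` E. incident p v}" for v
    unfolding pages_at_def incident_def by auto
  ultimately show ?thesis
    by simp
qed

lemma card_page_le:
  fixes pos :: "'a \<Rightarrow> nat"
  assumes "graph V E" "book_embedding V E pos pg" "p \<in> pg ` E"
  shows "card {e \<in> E. pg e = p} + 3 \<le> 2 * card (\<Union>{e \<in> E. pg e = p})"
proof (rule card_noncrossing_edges_le)
  show "graph V {e \<in> E. pg e = p}"
    by (rule graph_mono[OF assms(1)]) blast
  show "inj_on pos V"
    using assms(2) unfolding book_embedding_def by blast
  show "\<forall>e\<in>{e \<in> E. pg e = p}. \<forall>f\<in>{e \<in> E. pg e = p}. \<not> crossing pos e f"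
    using assms(2) unfolding book_embedding_def by blast
  show "{e \<in> E. pg e = p} \<noteq> {}"
    using assms(3) by blast
qed

lemma card_edges_le_k_local:
  fixes pos :: "'a \<Rightarrow> nat"
  assumes "graph V E" "book_embedding V E pos pg" "k_local V E pg k" "2 \<le> card V"
  shows "card E \<le> k * (2 * card V - 3)"
proof -
  define P where "P = pg ` E"
  define page where "page p = {e \<in> E. pg e = p}" for p
  define m where "m = min k (card P)"
  have "finite E"
    using assms(1) by (rule graph_finite_edges)
  then have "finite P"
    unfolding P_def by simp
  have card_E: "card E = (\<Sum>p\<in>P. card (page p))"
    unfolding P_def page_def card_eq_sum by (rule sum.image_gen[OF \<open>finite E\<close>])
  have page_bound: "card (page p) + 3 \<le> 2 * card (\<Union>(page p))" if "p \<in> P" for p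
    using card_page_le[OF assms(1,2)] that unfolding P_def page_def .
  have pages_at_le: "card (pages_at E pg v) \<le> m" if "v \<in> V" for v
  proof -
    have "pages_at E pg v \<subseteq> P"
      unfolding pages_at_def P_def by blast
    then have "card (pages_at E pg v) \<le> card P"
      using \<open>finite P\<close> by (rule card_mono[rotated])
    moreover have "card (pages_at E pg v) \<le> k"
      using assms(3) that unfolding k_local_def by blast
    ultimately show ?thesis
      unfolding m_def by simp
  qed
  have "card E + 3 * card P = (\<Sum>p\<in>P. card (page p) + 3)"
    by (simp add: card_E sum.distrib)
  also have "\<dots> \<le> (\<Sum>p\<in>P. 2 * card (\<Union>(page p)))"
    using page_bound by (rule sum_mono)
  also have "\<dots> = 2 * (\<Sum>v\<in>V. card (pages_at E pg v))"
    unfolding sum_distrib_left[symmetric] P_def page_def sum_card_page_vertices[OF assms(1)] ..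
  also have "\<dots> \<le> 2 * (card V * m)"
    using sum_bounded_above[of V "\<lambda>v. card (pages_at E pg v)" m] pages_at_le by simp
  finally have "card E + 3 * card P \<le> 2 * (card V * m)" .
  moreover have "m \<le> card P"
    unfolding m_def by simp
  ultimately have "card E \<le> 2 * card V * m - 3 * m"
    by (simp add: mult.assoc)
  also have "\<dots> = (2 * card V - 3) * m"
    by (rule diff_mult_distrib[symmetric])
  also have "\<dots> \<le> (2 * card V - 3) * k"
    unfolding m_def by (rule mult_left_mono) simp_all
  finally show ?thesis
    by (simp add: mult.commute)
qed

lemma book_embedding_mono:
  "book_embedding V E pos pg \<Longrightarrow> V' \<subseteq> V \<Longrightarrow> E' \<subseteq> E \<Longrightarrow> book_embedding V' E' pos pg"
  unfolding book_embedding_def using inj_on_subset[of pos V V'] by blast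

lemma k_local_mono:
  assumes "k_local V E pg k" "finite E" "V' \<subseteq> V" "E' \<subseteq> E"
  shows "k_local V' E' pg k"
  unfolding k_local_def
proof
  fix v assume "v \<in> V'"
  have "pages_at E' pg v \<subseteq> pages_at E pg v"
    using assms(4) unfolding pages_at_def by blast
  then have "card (pages_at E' pg v) \<le> card (pages_at E pg v)"
    using assms(2) by (intro card_mono) (simp_all add: pages_at_def)
  also have "\<dots> \<le> k"
    using assms(1,3) \<open>v \<in> V'\<close> unfolding k_local_def by blast
  finally show "card (pages_at E' pg v) \<le> k" .
qed

lemma local_page_number_attained:
  assumes "graph V E"
  obtains pos pg where "book_embedding V E pos pg" "k_local V E pg (local_page_number V E)"
proof -
  obtain pos :: "'a \<Rightarrow> nat" where "inj_on pos V"
    using assms finite_imp_inj_to_nat_seg unfolding graph_def by metis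
  obtain pg :: "'a set \<Rightarrow> nat" where "inj_on pg E"
    using graph_finite_edges[OF assms] finite_imp_inj_to_nat_seg by metis
  have "pg e \<noteq> pg f" if "e \<in> E" "f \<in> E" "crossing pos e f" for e f
    using inj_on_eq_iff[OF \<open>inj_on pg E\<close> that(1,2)] crossing_irrefl that(3) by metis
  then have "book_embedding V E pos pg"
    unfolding book_embedding_def using \<open>inj_on pos V\<close> by blast
  moreover have "card (pages_at E pg v) \<le> card E" for v
  proof -
    have "card (pages_at E pg v) \<le> card {e \<in> E. v \<in> e}"
      unfolding pages_at_def by (rule card_image_le) (simp add: graph_finite_edges[OF assms])
    also have "\<dots> \<le> card E"
      by (rule card_mono) (auto simp: graph_finite_edges[OF assms])
    finally show ?thesis .
  qed
  then have "k_local V E pg (card E)"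
    unfolding k_local_def by blast
  ultimately have "\<exists>k pos pg. book_embedding V E pos pg \<and> k_local V E pg k"
    by blast
  then have "\<exists>pos pg. book_embedding V E pos pg \<and> k_local V E pg (local_page_number V E)"
    unfolding local_page_number_def by (rule LeastI_ex)
  then show thesis
    using that by blast
qed

theorem lemma1:
  fixes V :: "'a set" and E :: "'a set set"
  assumes "graph V E"
  shows "\<forall>VH EH. subgraph VH EH V E \<and> VH \<noteq> {} \<longrightarrow>
           real (local_page_number V E) \<ge> real (card EH) / (2 * real (card VH) - 3)"
proof (intro allI impI, elim conjE)
  fix VH EH
  assume "subgraph VH EH V E" "VH \<noteq> {}"
  then have "VH \<subseteq> V" "EH \<subseteq> E" "graph VH EH"
    unfolding subgraph_def by auto
  obtain pos pg where "book_embedding V E pos pg" "k_local V E pg (local_page_number V E)"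
    using local_page_number_attained[OF assms] .
  show "real (card EH) / (2 * real (card VH) - 3) \<le> real (local_page_number V E)"
  proof (cases "2 \<le> card VH")
    case True
    have "card EH \<le> local_page_number V E * (2 * card VH - 3)"
    proof (rule card_edges_le_k_local[OF \<open>graph VH EH\<close> _ _ True])
      show "book_embedding VH EH pos pg"
        using book_embedding_mono \<open>book_embedding V E pos pg\<close> \<open>VH \<subseteq> V\<close> \<open>EH \<subseteq> E\<close> .
      show "k_local VH EH pg (local_page_number V E)"
        using k_local_mono \<open>k_local V E pg _\<close> graph_finite_edges[OF assms] \<open>VH \<subseteq> V\<close> \<open>EH \<subseteq> E\<close> .
    qed
    moreover have "real (2 * card VH - 3) = 2 * real (card VH) - 3"
      using True by (simp add: of_nat_diff)
    ultimately have "real (card EH) \<le> real (local_page_number V E) * (2 * real (card VH) - 3)"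
      by (metis of_nat_le_iff of_nat_mult)
    then show ?thesis
      using True by (simp add: divide_le_eq)
  next
    case False
    then show ?thesis
      using graph_no_edges[OF \<open>graph VH EH\<close>] by simp
  qed
qed

end
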